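(* Let $\nu$ be an ergodic $S$-invariant Borel probability measure on $X_\eta$ with $\nu(Y)=1$. Then there exists an ergodic $S\times S$-invariant probability measure $\widetilde\rho$ on $X_\eta\times\{0,1\}^{\mathbb Z}$ whose projection onto the first coordinate is the Mirsky measure $\nu_{\mathscr B}$ and such that $M_*(\widetilde\rho)=\nu$.
   Context: Let $S$ be the shift on $\{0,1\}^{\mathbb Z}$, $(Sx)(n)=x(n+1)$. Let $\mathscr{B}=\{b_1,b_2,\dots\}\subset\{2,3,\dots\}$ with $\gcd(b_i,b_j)=1$ for $i\ne j$ and $\sum_i1/b_i<\infty$. Define $\eta(n)=1$ iff $b_i\nmid n$ for all $i$ (else $0$), and let $X_\eta$ be the set of $y\in\{0,1\}^{\mathbb Z}$ all of whose finite blocks occur in $\eta$; equivalently $y\in X_\eta$ iff $|\mathrm{supp}(y)\bmod b_i|<b_i$ for all $i$, where $\mathrm{supp}(y)=\{n:y(n)=1\}$. Let $Y=\{x\in X_\eta: |\mathrm{supp}(x)\bmod b_i|=b_i-1\ \text{for all } i\ge1\}$. Let $\Omega=\prod_i\mathbb Z/b_i\mathbb Z$ with Haar measure $\mathbb P$ and $\varphi(\omega)(n)=1$ iff $\omega(i)+n\not\equiv 0\pmod{b_i}$ for all $i$; the Mirsky measure is $\nu_{\mathscr B}=\varphi_*\mathbb P$. The map $M:X_\eta\times\{0,1\}^{\mathbb Z}\to X_\eta$ is $M(x,u)(n)=x(n)u(n)$. *)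

theory Defs
  imports "HOL-Probability.Probability"
begin

text \<open>Configurations in {0,1}^Z are modelled as functions int => bool
  (True = 1), with the product sigma-algebra (= Borel sigma-algebra of the
  product topology, since the product is countable and the factors finite).\<close>

definition cfg_space :: "(int \<Rightarrow> bool) measure" where
  "cfg_space = PiM UNIV (\<lambda>_. count_space UNIV)"

definition shift :: "(int \<Rightarrow> bool) \<Rightarrow> (int \<Rightarrow> bool)" where
  "shift x = (\<lambda>n. x (n + 1))"

definition supp :: "(int \<Rightarrow> bool) \<Rightarrow> int set" where
  "supp y = {n. y n}"

text \<open>The characteristic function of the B-free integers; B = {b i | i}.\<close>
definition eta :: "(nat \<Rightarrow> nat) \<Rightarrow> int \<Rightarrow> bool" where
  "eta b n = (\<forall>i. \<not> int (b i) dvd n)"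

definition X_eta :: "(nat \<Rightarrow> nat) \<Rightarrow> (int \<Rightarrow> bool) set" where
  "X_eta b = {y. \<forall>(a::int) (L::nat). \<exists>t::int. \<forall>j<L. y (a + int j) = eta b (t + int j)}"

definition Y_set :: "(nat \<Rightarrow> nat) \<Rightarrow> (int \<Rightarrow> bool) set" where
  "Y_set b = {x \<in> X_eta b. \<forall>i. card ((\<lambda>n. n mod int (b i)) ` supp x) = b i - 1}"

text \<open>Haar measure on Omega = prod_i Z/b_iZ: the product of the uniform
  probability measures on the residues {0..<b i}.\<close>
definition haar_Omega :: "(nat \<Rightarrow> nat) \<Rightarrow> (nat \<Rightarrow> int) measure" where
  "haar_Omega b = PiM UNIV (\<lambda>i. measure_pmf (pmf_of_set {0..<int (b i)}))"

definition phi :: "(nat \<Rightarrow> nat) \<Rightarrow> (nat \<Rightarrow> int) \<Rightarrow> (int \<Rightarrow> bool)" where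
  "phi b \<omega> = (\<lambda>n. \<forall>i. (\<omega> i + n) mod int (b i) \<noteq> 0)"

definition mirsky :: "(nat \<Rightarrow> nat) \<Rightarrow> (int \<Rightarrow> bool) measure" where
  "mirsky b = distr (haar_Omega b) cfg_space (phi b)"

definition Mmap :: "(int \<Rightarrow> bool) \<times> (int \<Rightarrow> bool) \<Rightarrow> (int \<Rightarrow> bool)" where
  "Mmap p = (\<lambda>n. fst p n \<and> snd p n)"

definition invariant_meas :: "'a measure \<Rightarrow> ('a \<Rightarrow> 'a) \<Rightarrow> bool" where
  "invariant_meas m T \<longleftrightarrow> T \<in> measurable m m \<and> distr m m T = m"

definition ergodic_meas :: "'a measure \<Rightarrow> ('a \<Rightarrow> 'a) \<Rightarrow> bool" where
  "ergodic_meas m T \<longleftrightarrow> invariant_meas m T \<and>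
     (\<forall>A \<in> sets m. T -` A \<inter> space m = A \<longrightarrow> emeasure m A = 0 \<or> emeasure m A = 1)"

end

theory Submission
  imports Defs "HOL-Number_Theory.Cong"
begin

(* For x in Y each modulus b_i leaves exactly one residue class free of supp x; the
   residue v with -v in that class is the i-th hole theta_i(x).  Thus theta(x) is a point
   of Omega with x <= phi(theta(x)), and theta turns the shift into the rotation of Omega.
   The joining is the image of nu under x |-> (phi(theta x), x). *)

lemma inj_moduli:
  assumes "\<And>i. b i \<ge> (2::nat)" and "\<And>i j. i \<noteq> j \<Longrightarrow> coprime (b i) (b j)"
  shows "inj b"
proof (rule injI, rule ccontr)
  fix i j assume "b i = b j" "i \<noteq> j"
  then have "coprime (b i) (b i)" using assms(2) by metis
  then show False using assms(1)[of i] by simp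
qed

lemma finite_moduli_le:
  assumes "inj (b::nat \<Rightarrow> nat)" shows "finite {i. b i \<le> N}"
  using finite_vimageI[OF _ assms, of "{..N}"] by (simp add: vimage_def)

lemma summable_tail_small:
  assumes "inj (b::nat \<Rightarrow> nat)" "summable (\<lambda>i. 1 / real (b i))" "(e::real) > 0"
  shows "\<exists>N. \<forall>F. finite F \<longrightarrow> (\<forall>i\<in>F. b i > N) \<longrightarrow> (\<Sum>i\<in>F. 1 / real (b i)) < e"
proof -
  let ?f = "\<lambda>i. 1 / real (b i)"
  obtain K where K: "norm (\<Sum>i. ?f (i + K)) < e"
    using suminf_exist_split[OF assms(3) assms(2)] by blast
  define N where "N = Max (b ` {..<K})"
  have sK: "summable (\<lambda>i. ?f (i + K))" using assms(2) summable_iff_shift[of ?f K] by simp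
  show ?thesis
  proof (intro exI allI impI)
    fix F assume F: "finite F" "\<forall>i\<in>F. N < b i"
    have FK: "i \<ge> K" if "i \<in> F" for i
    proof (rule ccontr)
      assume "\<not> K \<le> i"
      then have "b i \<le> N" unfolding N_def by (intro Max_ge) auto
      with F that show False by auto
    qed
    have inj: "inj_on (\<lambda>i. i - K) F"
      by (rule inj_onI) (use FK in \<open>metis le_add_diff_inverse2\<close>)
    have "(\<Sum>i\<in>F. ?f i) = (\<Sum>i\<in>(\<lambda>i. i - K) ` F. ?f (i + K))"
      by (subst sum.reindex[OF inj]) (use FK in \<open>auto intro!: sum.cong\<close>)
    also have "\<dots> \<le> (\<Sum>i. ?f (i + K))"
      by (rule sum_le_suminf[OF sK]) (use F in auto)
    also have "\<dots> < e" using K by simp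
    finally show "(\<Sum>i\<in>F. ?f i) < e" .
  qed
qed

lemma chinese_remainder_int_targets:
  fixes b :: "'a \<Rightarrow> nat" and t :: "'a \<Rightarrow> int"
  assumes "finite A" "\<And>i. i \<in> A \<Longrightarrow> b i > 0"
    and "\<And>i j. i \<in> A \<Longrightarrow> j \<in> A \<Longrightarrow> i \<noteq> j \<Longrightarrow> coprime (b i) (b j)"
  shows "\<exists>x::nat. \<forall>i\<in>A. [int x = t i] (mod int (b i))"
proof -
  obtain x where x: "\<forall>i\<in>A. [x = nat (t i mod int (b i))] (mod b i)"
    using chinese_remainder_nat[OF assms(1), of b "\<lambda>i. nat (t i mod int (b i))"] assms(3) by blast
  have "[int x = t i] (mod int (b i))" if "i \<in> A" for i
  proof -
    have "[int x = int (nat (t i mod int (b i)))] (mod int (b i))"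
      using x that by (simp only: cong_int_iff)
    also have "int (nat (t i mod int (b i))) = t i mod int (b i)"
      using assms(2)[OF that] by simp
    also have "[t i mod int (b i) = t i] (mod int (b i))" by (simp add: cong_def)
    finally show ?thesis .
  qed
  then show ?thesis by blast
qed

lemma card_multiples_in_progression:
  fixes d P q M :: nat
  assumes "coprime P q" "q > 0"
  shows "card {s\<in>{1..M}. q dvd d + P * s} \<le> M div q + 1"
proof -
  let ?S = "{s\<in>{1..M}. q dvd d + P * s}"
  have "inj_on (\<lambda>s. s div q) ?S"
  proof (rule inj_onI)
    fix s s' assume "s \<in> ?S" "s' \<in> ?S" and div_eq: "s div q = s' div q"
    then have "[d + P * s = d + P * s'] (mod q)" by (simp add: cong_def dvd_eq_mod_eq_0)
    then have "[s = s'] (mod q)" using assms(1) by (simp add: cong_add_lcancel_nat cong_mult_lcancel_nat)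
    then show "s = s'" using div_eq unfolding cong_def by (metis div_mult_mod_eq)
  qed
  moreover have "(\<lambda>s. s div q) ` ?S \<subseteq> {0..M div q}" by (auto intro: div_le_mono)
  ultimately have "card ?S \<le> card {0..M div q}" by (intro card_inj_on_le) auto
  then show ?thesis by simp
qed

text \<open>The arithmetic estimate behind the counting lemma below: moduli up to M contribute
  at most 2M/b_i each, larger ones (at most 3PM) at most 3PM/b_i each.\<close>

lemma sum_progression_counts_le:
  fixes b :: "nat \<Rightarrow> nat" and G :: "nat set" and P L M :: nat
  assumes "finite G" "P > 0" "M > 0" and b_range: "\<And>i. i \<in> G \<Longrightarrow> 0 < b i \<and> b i \<le> 3 * P * M"
    and small: "(\<Sum>i\<in>G. 1 / real (b i)) < 1 / (4 * (real L + 1))"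
    and large: "(\<Sum>i\<in>{i\<in>G. M < b i}. 1 / real (b i)) < 1 / (8 * (real L + 1) * real P)"
  shows "real (\<Sum>i\<in>G. M div b i + 1) \<le> real M / (real L + 1)"
proof -
  let ?big = "\<lambda>i. if M < b i then 1 / real (b i) else 0"
  have term_bound: "real (M div b i + 1) \<le> 2 * real M * (1 / real (b i)) + 3 * real P * real M * ?big i"
    if "i \<in> G" for i
  proof (cases "b i \<le> M")
    case True
    have "real (M div b i) \<le> real M / real (b i)" by (rule of_nat_div_le_of_nat)
    moreover have "1 \<le> real M / real (b i)" using True b_range[OF that] by simp
    ultimately show ?thesis using True by simp
  next
    case False
    have "real (b i) \<le> 3 * real P * real M"
      using b_range[OF that] by (metis of_nat_le_iff of_nat_mult of_nat_numeral)
    then show ?thesis using False b_range[OF that] by (simp add: field_simps)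
  qed
  have "real (\<Sum>i\<in>G. M div b i + 1)
      \<le> (\<Sum>i\<in>G. 2 * real M * (1 / real (b i)) + 3 * real P * real M * ?big i)"
    unfolding of_nat_sum by (intro sum_mono term_bound)
  also have "\<dots> = 2 * real M * (\<Sum>i\<in>G. 1 / real (b i))
      + 3 * real P * real M * (\<Sum>i\<in>{i\<in>G. M < b i}. 1 / real (b i))"
    using assms(1) by (simp add: sum.distrib sum_distrib_left sum.inter_filter)
  also have "\<dots> \<le> 2 * real M * (1 / (4 * (real L + 1)))
      + 3 * real P * real M * (1 / (8 * (real L + 1) * real P))"
    using small large assms(2,3) by (intro add_mono mult_left_mono) auto
  also have "\<dots> = 7 / 8 * (real M / (real L + 1))"
  proof -
    have "real P \<noteq> 0" using assms(2) by simp
    then have "3 * real P * real M * (1 / (8 * (real L + 1) * real P)) = 3 / 8 * (real M / (real L + 1))"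
      by (simp add: divide_simps)
    moreover have "2 * real M * (1 / (4 * (real L + 1))) = 1 / 2 * (real M / (real L + 1))"
      by (simp add: divide_simps)
    ultimately show ?thesis by linarith
  qed
  also have "\<dots> \<le> real M / (real L + 1)" by (rule mult_left_le_one_le) simp_all
  finally show ?thesis .
qed

text \<open>The counting core of the fact that Mirsky points lie in the B-free subshift:
  if I contains all small moduli and c is a residue mod P = \<Prod>i\<in>I. b i, then some
  translate c + P*s (1 \<le> s \<le> M) avoids all moduli outside I on a window of length L,
  because the tail \<Sum>i\<notin>I. 1/b i is small.\<close>

lemma multiplier_avoiding_other_moduli:
  fixes b :: "nat \<Rightarrow> nat" and I :: "nat set" and P c L M :: nat
  assumes fin: "\<And>K. finite {i. b i \<le> K}" and bpos: "\<And>i. b i > 0"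
    and cop: "\<And>i. i \<notin> I \<Longrightarrow> coprime P (b i)" and "c < P" "L < M"
    and small: "\<And>F. finite F \<Longrightarrow> F \<inter> I = {} \<Longrightarrow> (\<Sum>i\<in>F. 1 / real (b i)) < 1 / (4 * (real L + 1))"
    and large: "\<And>F. finite F \<Longrightarrow> (\<forall>i\<in>F. M < b i) \<Longrightarrow>
                 (\<Sum>i\<in>F. 1 / real (b i)) < 1 / (8 * (real L + 1) * real P)"
  shows "\<exists>s\<in>{1..M}. \<forall>j<L. \<forall>i. i \<notin> I \<longrightarrow> \<not> b i dvd c + P * s + j"
proof (rule ccontr)
  assume "\<not> ?thesis"
  then have all_bad: "\<forall>s\<in>{1..M}. \<exists>j<L. \<exists>i. i \<notin> I \<and> b i dvd c + P * s + j" by blast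
  have P: "P > 0" using \<open>c < P\<close> by simp
  define G where "G = {i. i \<notin> I \<and> b i \<le> 3 * P * M}"
  have finG: "finite G" unfolding G_def by (rule finite_subset[OF _ fin]) auto
  have cover: "{1..M} \<subseteq> (\<Union>j\<in>{..<L}. \<Union>i\<in>G. {s\<in>{1..M}. b i dvd (c + j) + P * s})"
  proof
    fix s assume s: "s \<in> {1..M}"
    then obtain j i where ji: "j < L" "i \<notin> I" "b i dvd c + P * s + j" using all_bad by blast
    have "b i \<le> c + P * s + j" using ji(3) s P by (intro dvd_imp_le) auto
    also have "\<dots> \<le> 3 * P * M"
    proof -
      have "P * s \<le> P * M" "P \<le> P * M" "M \<le> P * M" using s P by simp_all
      then show ?thesis using ji(1) \<open>c < P\<close> \<open>L < M\<close> by linarith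
    qed
    finally have "i \<in> G" unfolding G_def using ji(2) by simp
    moreover have "b i dvd (c + j) + P * s" using ji(3) by (simp add: ac_simps)
    ultimately show "s \<in> (\<Union>j\<in>{..<L}. \<Union>i\<in>G. {s\<in>{1..M}. b i dvd (c + j) + P * s})"
      using s ji(1) by blast
  qed
  have "finite (\<Union>j\<in>{..<L}. \<Union>i\<in>G. {s\<in>{1..M}. b i dvd (c + j) + P * s})"
    by (rule finite_subset[of _ "{1..M}"]) auto
  then have "M \<le> card (\<Union>j\<in>{..<L}. \<Union>i\<in>G. {s\<in>{1..M}. b i dvd (c + j) + P * s})"
    using card_mono[OF _ cover] by simp
  also have "\<dots> \<le> (\<Sum>j\<in>{..<L}. \<Sum>i\<in>G. card {s\<in>{1..M}. b i dvd (c + j) + P * s})"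
    by (intro order.trans[OF card_UN_le] sum_mono card_UN_le finG) auto
  also have "\<dots> \<le> (\<Sum>j\<in>{..<L}. \<Sum>i\<in>G. M div b i + 1)"
    using cop bpos by (intro sum_mono card_multiples_in_progression) (auto simp: G_def)
  also have "\<dots> = L * (\<Sum>i\<in>G. M div b i + 1)" by simp
  finally have "real M \<le> real L * real (\<Sum>i\<in>G. M div b i + 1)"
    by (metis of_nat_le_iff of_nat_mult)
  also have "\<dots> \<le> real L * (real M / (real L + 1))"
  proof (intro mult_left_mono sum_progression_counts_le)
    show "(\<Sum>i\<in>G. 1 / real (b i)) < 1 / (4 * (real L + 1))"
      using finG by (intro small) (auto simp: G_def)
    show "(\<Sum>i\<in>{i\<in>G. M < b i}. 1 / real (b i)) < 1 / (8 * (real L + 1) * real P)"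
      using finG by (intro large) auto
  qed (use finG P \<open>L < M\<close> bpos in \<open>auto simp: G_def\<close>)
  also have "\<dots> < real M" using \<open>L < M\<close> by (simp add: field_simps)
  finally show False by simp
qed

lemma window_of_phi_in_eta:
  fixes b :: "nat \<Rightarrow> nat" and I :: "nat set" and a t :: int
  assumes agree: "\<And>i. i \<in> I \<Longrightarrow> [t = \<omega> i + a] (mod int (b i))"
    and avoid: "\<And>i. i \<notin> I \<Longrightarrow> \<not> int (b i) dvd t + int j"
    and zero_witness: "\<not> phi b \<omega> (a + int j) \<Longrightarrow> \<exists>i\<in>I. int (b i) dvd \<omega> i + (a + int j)"
  shows "phi b \<omega> (a + int j) = eta b (t + int j)"
proof -
  have on_I: "int (b i) dvd t + int j \<longleftrightarrow> int (b i) dvd \<omega> i + (a + int j)" if "i \<in> I" for i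
  proof -
    have "[t + int j = \<omega> i + a + int j] (mod int (b i))"
      using agree[OF that] by (rule cong_add) (rule cong_refl)
    then show ?thesis unfolding add.assoc by (rule cong_dvd_iff)
  qed
  have "eta b (t + int j) \<longleftrightarrow> (\<forall>i\<in>I. \<not> int (b i) dvd t + int j)"
    unfolding eta_def using avoid by blast
  also have "\<dots> \<longleftrightarrow> (\<forall>i\<in>I. \<not> int (b i) dvd \<omega> i + (a + int j))"
    using on_I by blast
  also have "\<dots> \<longleftrightarrow> phi b \<omega> (a + int j)"
  proof
    assume "\<forall>i\<in>I. \<not> int (b i) dvd \<omega> i + (a + int j)"
    then show "phi b \<omega> (a + int j)" using zero_witness by blast
  qed (auto simp: phi_def dvd_eq_mod_eq_0)
  finally show ?thesis by simp
qed

text \<open>For a window of length L, let I consist of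
  the small moduli and of one witness for each zero of the window; the position is
  t = c + P*s, where c solves the congruences t \<equiv> \<omega>_i + a (i \<in> I) modulo P = \<Prod>i\<in>I. b i
  and s is supplied by the counting lemma.\<close>

lemma phi_in_X_eta:
  assumes b_ge: "\<And>i. b i \<ge> 2"
    and b_coprime: "\<And>i j. i \<noteq> j \<Longrightarrow> coprime (b i) (b j)"
    and b_summable: "summable (\<lambda>i. 1 / real (b i))"
  shows "phi b \<omega> \<in> X_eta b"
  unfolding X_eta_def
proof (intro CollectI allI)
  fix a :: int and L :: nat
  have inj: "inj b" by (rule inj_moduli[OF b_ge b_coprime])
  have bpos: "b i > 0" for i using b_ge[of i] by simp
  define Z where "Z = {j. j < L \<and> \<not> phi b \<omega> (a + int j)}"
  have "\<forall>j\<in>Z. \<exists>i. int (b i) dvd \<omega> i + (a + int j)"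
    unfolding Z_def phi_def by (auto simp: dvd_eq_mod_eq_0)
  then obtain wit where wit: "\<And>j. j \<in> Z \<Longrightarrow> int (b (wit j)) dvd \<omega> (wit j) + (a + int j)"
    by metis
  obtain N1 where N1: "\<And>F. finite F \<Longrightarrow> (\<forall>i\<in>F. b i > N1) \<Longrightarrow>
      (\<Sum>i\<in>F. 1 / real (b i)) < 1 / (4 * (real L + 1))"
    using summable_tail_small[OF inj b_summable, of "1 / (4 * (real L + 1))"] by auto
  define I where "I = {i. b i \<le> N1} \<union> wit ` Z"
  have finI: "finite I" unfolding I_def Z_def using finite_moduli_le[OF inj] by auto
  define P where "P = (\<Prod>i\<in>I. b i)"
  have P: "P > 0" unfolding P_def using bpos by (simp add: prod_pos)
  obtain N2 where N2: "\<And>F. finite F \<Longrightarrow> (\<forall>i\<in>F. b i > N2) \<Longrightarrow>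
      (\<Sum>i\<in>F. 1 / real (b i)) < 1 / (8 * (real L + 1) * real P)"
    using summable_tail_small[OF inj b_summable, of "1 / (8 * (real L + 1) * real P)"] P by auto
  define M where "M = max N2 (L + 1)"
  obtain x where x: "\<forall>i\<in>I. [int x = \<omega> i + a] (mod int (b i))"
    using chinese_remainder_int_targets[OF finI, of b "\<lambda>i. \<omega> i + a"] bpos b_coprime by blast
  define c where "c = x mod P"
  have "\<exists>s\<in>{1..M}. \<forall>j<L. \<forall>i. i \<notin> I \<longrightarrow> \<not> b i dvd c + P * s + j"
  proof (rule multiplier_avoiding_other_moduli)
    show "coprime P (b i)" if "i \<notin> I" for i
      unfolding P_def using that finI by (intro prod_coprime_left b_coprime) auto
    show "(\<Sum>i\<in>F. 1 / real (b i)) < 1 / (8 * (real L + 1) * real P)"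
      if "finite F" "\<forall>i\<in>F. M < b i" for F using that by (intro N2) (auto simp: M_def)
    show "(\<Sum>i\<in>F. 1 / real (b i)) < 1 / (4 * (real L + 1))"
      if "finite F" "F \<inter> I = {}" for F using that by (intro N1) (auto simp: I_def)
  qed (use finite_moduli_le[OF inj] bpos P in \<open>auto simp: c_def M_def\<close>)
  then obtain s where avoid: "\<And>j i. j < L \<Longrightarrow> i \<notin> I \<Longrightarrow> \<not> b i dvd c + P * s + j" by blast
  show "\<exists>t::int. \<forall>j<L. phi b \<omega> (a + int j) = eta b (t + int j)"
  proof (intro exI allI impI window_of_phi_in_eta)
    fix i j assume j: "j < L"
    show "[int (c + P * s) = \<omega> i + a] (mod int (b i))" if "i \<in> I"
    proof -
      have "b i dvd P" unfolding P_def using finI that by (rule dvd_prodI)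
      then have "[c + P * s = x] (mod b i)"
        unfolding c_def cong_def
        by (metis mod_mod_cancel mod_mult_self2 mod_add_left_eq dvd_mult_div_cancel mult.assoc)
      then have "[int (c + P * s) = int x] (mod int (b i))" by (simp only: cong_int_iff)
      also have "[int x = \<omega> i + a] (mod int (b i))" using x that by blast
      finally show ?thesis .
    qed
    show "\<not> int (b i) dvd int (c + P * s) + int j" if "i \<notin> I"
      using avoid[OF j that] by (metis int_dvd_int_iff of_nat_add)
    show "\<exists>i\<in>I. int (b i) dvd \<omega> i + (a + int j)" if "\<not> phi b \<omega> (a + int j)"
      using that j wit[of j] unfolding Z_def I_def by blast
  qed
qed

text \<open>Measurability of the maps between configurations, points of \<Omega> and pairs; the
  B-free subshift is measurable since its definition quantifies over countable sets only.\<close>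

lemma space_cfg[simp]: "space cfg_space = UNIV"
  by (simp add: cfg_space_def space_PiM)

lemma cfg_coord[measurable]: "(\<lambda>x. x n) \<in> measurable cfg_space (count_space UNIV)"
  unfolding cfg_space_def by (rule measurable_component_singleton) simp

lemma measurable_into_cfg:
  assumes "\<And>n. (\<lambda>\<omega>. f \<omega> n) \<in> measurable N (count_space UNIV)"
  shows "f \<in> measurable N cfg_space"
proof -
  have "(\<lambda>\<omega> n. f \<omega> n) \<in> measurable N cfg_space"
    unfolding cfg_space_def by (rule measurable_PiM_single') (use assms in auto)
  then show ?thesis by simp
qed

lemma shift_measurable[measurable]: "shift \<in> measurable cfg_space cfg_space"
  by (rule measurable_into_cfg) (simp add: shift_def)

lemma Mmap_measurable[measurable]: "Mmap \<in> measurable (cfg_space \<Otimes>\<^sub>M cfg_space) cfg_space"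
  by (rule measurable_into_cfg) (simp add: Mmap_def)

lemma X_eta_sets: "X_eta b \<in> sets cfg_space"
proof -
  have "Measurable.pred cfg_space (\<lambda>y. \<forall>(a::int) (L::nat). \<exists>t::int. \<forall>j<L. y (a + int j) = eta b (t + int j))"
    by measurable
  then show ?thesis unfolding X_eta_def by (simp add: pred_def)
qed

lemma haar_coord[measurable]: "(\<lambda>\<omega>. \<omega> i) \<in> measurable (haar_Omega b) (count_space UNIV)"
proof -
  have "(\<lambda>\<omega>. \<omega> i) \<in> measurable (haar_Omega b) (measure_pmf (pmf_of_set {0..<int (b i)}))"
    unfolding haar_Omega_def by (rule measurable_component_singleton) simp
  then show ?thesis by (simp add: measurable_cong_sets[OF refl sets_measure_pmf_count_space])
qed

lemma phi_measurable[measurable]: "phi b \<in> measurable (haar_Omega b) cfg_space"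
  by (rule measurable_into_cfg) (simp add: phi_def)

definition rot :: "(nat \<Rightarrow> nat) \<Rightarrow> (nat \<Rightarrow> int) \<Rightarrow> (nat \<Rightarrow> int)" where
  "rot b \<omega> = (\<lambda>i. (\<omega> i + 1) mod int (b i))"

lemma phi_rot: "phi b (rot b \<omega>) = shift (phi b \<omega>)"
  unfolding phi_def rot_def shift_def by (simp add: mod_add_right_eq algebra_simps)

text \<open>A hole of x modulo b i is a residue v such that x vanishes on the class of -v;
  in other words, the i-th coordinate v of a point \<omega> with x \<le> \<phi>(\<omega>).  On Y every x has
  exactly one hole per modulus, which defines the coordinates \<theta>(x) \<in> \<Omega>.\<close>

definition is_hole :: "(nat \<Rightarrow> nat) \<Rightarrow> (int \<Rightarrow> bool) \<Rightarrow> nat \<Rightarrow> int \<Rightarrow> bool" where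
  "is_hole b x i v \<longleftrightarrow> 0 \<le> v \<and> v < int (b i) \<and> (\<forall>m. x m \<longrightarrow> (m + v) mod int (b i) \<noteq> 0)"

definition theta :: "(nat \<Rightarrow> nat) \<Rightarrow> (int \<Rightarrow> bool) \<Rightarrow> nat \<Rightarrow> int" where
  "theta b x = (\<lambda>i. if \<exists>!v. is_hole b x i v then THE v. is_hole b x i v else 0)"

definition unique_holes :: "(nat \<Rightarrow> nat) \<Rightarrow> (int \<Rightarrow> bool) set" where
  "unique_holes b = {x. \<forall>i. \<exists>!v. is_hole b x i v}"

lemma holes_eq_singleton:
  assumes "x \<in> unique_holes b" shows "{v. is_hole b x i v} = {theta b x i}"
proof -
  have ex1: "\<exists>!v. is_hole b x i v" using assms unfolding unique_holes_def by simp
  then obtain v where v: "is_hole b x i v" "\<And>w. is_hole b x i w \<Longrightarrow> w = v" by blast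
  have "theta b x i = v" unfolding theta_def using ex1 by (simp add: the1_equality[OF ex1 v(1)])
  then show ?thesis using v by blast
qed

lemma unique_holesI:
  assumes "\<And>i. \<exists>v. {v. is_hole b x i v} = {v}" shows "x \<in> unique_holes b"
  unfolding unique_holes_def
proof (intro CollectI allI)
  fix i
  obtain v where "{v. is_hole b x i v} = {v}" using assms by blast
  then show "\<exists>!v. is_hole b x i v" by (simp add: set_eq_iff)
qed

lemma theta_range:
  assumes "b i > 0" shows "0 \<le> theta b x i \<and> theta b x i < int (b i)"
proof (cases "\<exists>!v. is_hole b x i v")
  case True
  then have "is_hole b x i (theta b x i)" unfolding theta_def by (simp add: theI')
  then show ?thesis by (simp add: is_hole_def)
qed (use assms in \<open>simp add: theta_def\<close>)

lemma is_hole_pred[measurable]: "Measurable.pred cfg_space (\<lambda>x. is_hole b x i v)"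
  unfolding is_hole_def by measurable

lemma theta_measurable_coord[measurable]:
  "(\<lambda>x. theta b x i) \<in> measurable cfg_space (count_space UNIV)"
proof -
  have eq: "(theta b x i = w) \<longleftrightarrow> ((\<exists>v. is_hole b x i v \<and> (\<forall>v'. is_hole b x i v' \<longrightarrow> v' = v))
      \<and> is_hole b x i w) \<or> (\<not> (\<exists>v. is_hole b x i v \<and> (\<forall>v'. is_hole b x i v' \<longrightarrow> v' = v)) \<and> w = 0)"
    for w x unfolding theta_def by (auto intro: the_equality) (metis the_equality)+
  show ?thesis unfolding measurable_count_space_eq2_countable
  proof (intro conjI ballI)
    fix w :: int
    have "Measurable.pred cfg_space (\<lambda>x. theta b x i = w)"
      unfolding eq by measurable
    then show "(\<lambda>x. theta b x i) -` {w} \<inter> space cfg_space \<in> sets cfg_space"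
      by (simp add: pred_def vimage_def Collect_conv_if)
  qed auto
qed

lemma theta_measurable[measurable]: "theta b \<in> measurable cfg_space (haar_Omega b)"
proof -
  have "(\<lambda>x i. theta b x i) \<in> measurable cfg_space (haar_Omega b)"
    unfolding haar_Omega_def
    by (rule measurable_PiM_single')
       (auto simp: measurable_cong_sets[OF refl sets_measure_pmf_count_space])
  then show ?thesis by simp
qed

lemma unique_holes_measurable[measurable]: "unique_holes b \<in> sets cfg_space"
proof -
  have "Measurable.pred cfg_space (\<lambda>x. \<forall>i. \<exists>v. is_hole b x i v \<and> (\<forall>v'. is_hole b x i v' \<longrightarrow> v' = v))"
    by measurable
  then show ?thesis unfolding unique_holes_def Ex1_def by (simp add: pred_def)
qed

lemma le_phi_theta:
  assumes "x \<in> unique_holes b" "x n" shows "phi b (theta b x) n"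
proof -
  have "is_hole b x i (theta b x i)" for i using holes_eq_singleton[OF assms(1), of i] by blast
  then show ?thesis using assms(2) unfolding phi_def is_hole_def by (simp add: add.commute)
qed

lemma mod_succ_pred: "0 \<le> (w::int) \<Longrightarrow> w < q \<Longrightarrow> ((w + 1) mod q - 1) mod q = w"
  by (metis add_diff_cancel_right' mod_diff_left_eq mod_pos_pos_trivial)

lemma mod_step_iff:
  fixes t c q :: int
  assumes "0 \<le> t" "t < q" "0 \<le> c" "c < q"
  shows "(t + 1) mod q = c \<longleftrightarrow> t = (c - 1) mod q"
proof
  assume "(t + 1) mod q = c"
  then show "t = (c - 1) mod q" using mod_succ_pred[OF assms(1,2)] by simp
next
  assume "t = (c - 1) mod q"
  then have "(t + 1) mod q = (c - 1 + 1) mod q" by (simp add: mod_add_left_eq)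
  then show "(t + 1) mod q = c" using assms(3,4) by simp
qed

lemma hole_shift_iff:
  assumes "0 \<le> w" "w < int (b i)"
  shows "is_hole b (shift x) i ((w + 1) mod int (b i)) \<longleftrightarrow> is_hole b x i w"
proof -
  let ?q = "int (b i)"
  have "(\<forall>m. x (m + 1) \<longrightarrow> (m + (w + 1) mod ?q) mod ?q \<noteq> 0)
      \<longleftrightarrow> (\<forall>m. x (m + 1) \<longrightarrow> ((m + 1) + w) mod ?q \<noteq> 0)"
    by (simp add: mod_add_right_eq algebra_simps)
  also have "\<dots> \<longleftrightarrow> (\<forall>m. x m \<longrightarrow> (m + w) mod ?q \<noteq> 0)"
  proof (intro iffI allI)
    fix m assume "\<forall>m. x (m + 1) \<longrightarrow> (m + 1 + w) mod ?q \<noteq> 0"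
    then show "x m \<longrightarrow> (m + w) mod ?q \<noteq> 0" by (metis diff_add_cancel)
  qed simp
  finally show ?thesis using assms unfolding is_hole_def shift_def by simp
qed

lemma holes_shift:
  assumes "b i > 0"
  shows "{v. is_hole b (shift x) i v} = (\<lambda>w. (w + 1) mod int (b i)) ` {w. is_hole b x i w}"
proof (intro set_eqI iffI)
  fix v assume "v \<in> {v. is_hole b (shift x) i v}"
  then have v: "is_hole b (shift x) i v" by simp
  define w where "w = (v - 1) mod int (b i)"
  have w: "0 \<le> w" "w < int (b i)" using assms unfolding w_def by simp_all
  have "v = (w + 1) mod int (b i)"
    using v unfolding w_def is_hole_def by (simp add: mod_add_left_eq)
  then show "v \<in> (\<lambda>w. (w + 1) mod int (b i)) ` {w. is_hole b x i w}"
    using v hole_shift_iff[where b=b and i=i, OF w] by blast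
next
  fix v assume "v \<in> (\<lambda>w. (w + 1) mod int (b i)) ` {w. is_hole b x i w}"
  then obtain w where w: "is_hole b x i w" "v = (w + 1) mod int (b i)" by blast
  then have "0 \<le> w" "w < int (b i)" by (simp_all add: is_hole_def)
  then show "v \<in> {v. is_hole b (shift x) i v}" using w hole_shift_iff[where b=b and i=i] by simp
qed

lemma theta_shift:
  assumes "\<And>i. b i > 0" "x \<in> unique_holes b"
  shows "shift x \<in> unique_holes b" "theta b (shift x) = rot b (theta b x)"
proof -
  have holes: "{v. is_hole b (shift x) i v} = {rot b (theta b x) i}" for i
    unfolding holes_shift[where b=b and i=i, OF assms(1)] holes_eq_singleton[OF assms(2)] rot_def
    by simp
  then show shifted: "shift x \<in> unique_holes b" by (intro unique_holesI) blast
  show "theta b (shift x) = rot b (theta b x)"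
  proof
    fix i show "theta b (shift x) i = rot b (theta b x) i"
      using holes_eq_singleton[OF shifted, of i] holes[of i] by simp
  qed
qed

lemma unique_holes_shift_iff:
  assumes "\<And>i. b i > 0" shows "shift x \<in> unique_holes b \<longleftrightarrow> x \<in> unique_holes b"
proof
  assume sx: "shift x \<in> unique_holes b"
  show "x \<in> unique_holes b"
  proof (rule unique_holesI)
    fix i
    let ?q = "int (b i)" and ?H = "{w. is_hole b x i w}"
    have inj: "inj_on (\<lambda>w. (w + 1) mod ?q) ?H"
      by (rule inj_onI) (metis is_hole_def mem_Collect_eq mod_succ_pred)
    have image: "(\<lambda>w. (w + 1) mod ?q) ` ?H = {theta b (shift x) i}"
      using holes_shift[where b=b and i=i, OF assms] holes_eq_singleton[OF sx] by metis
    then obtain w where w: "w \<in> ?H" by blast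
    have "w' = w" if "w' \<in> ?H" for w'
    proof (rule inj_onD[OF inj _ that w])
      have "(w' + 1) mod ?q \<in> (\<lambda>w. (w + 1) mod ?q) ` ?H" "(w + 1) mod ?q \<in> (\<lambda>w. (w + 1) mod ?q) ` ?H"
        using that w by simp_all
      then show "(w' + 1) mod ?q = (w + 1) mod ?q" unfolding image by simp
    qed
    then have "?H = {w}" using w by blast
    then show "\<exists>w. ?H = {w}" ..
  qed
qed (rule theta_shift(1)[OF assms])

lemma Y_subset_unique_holes:
  assumes "\<And>i. b i > 0" shows "Y_set b \<subseteq> unique_holes b"
proof (intro subsetI unique_holesI)
  fix x i assume x: "x \<in> Y_set b"
  let ?q = "int (b i)"
  define R where "R = (\<lambda>n. n mod ?q) ` supp x"
  have q: "?q > 0" using assms[of i] by simp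
  have "R \<subseteq> {0..<?q}" unfolding R_def using q by auto
  moreover have "card R = b i - 1" using x unfolding Y_set_def R_def by simp
  ultimately have "card ({0..<?q} - R) = 1"
    using assms[of i] by (subst card_Diff_subset) (auto intro: finite_subset)
  then obtain r where r: "{0..<?q} - R = {r}" using card_1_singletonE by blast
  then have r_range: "0 \<le> r" "r < ?q" by auto
  have "is_hole b x i v \<longleftrightarrow> v = (- r) mod ?q" for v
  proof -
    have zero_iff: "(m + v) mod ?q = 0 \<longleftrightarrow> m mod ?q = (- v) mod ?q" for m
      by (simp add: mod_eq_dvd_iff dvd_eq_mod_eq_0)
    have "is_hole b x i v \<longleftrightarrow> 0 \<le> v \<and> v < ?q \<and> (- v) mod ?q \<notin> R"
      unfolding is_hole_def R_def supp_def zero_iff by (fastforce simp: image_iff)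
    also have "\<dots> \<longleftrightarrow> 0 \<le> v \<and> v < ?q \<and> (- v) mod ?q = r"
    proof -
      have "(- v) mod ?q \<in> {0..<?q}" using q by simp
      then show ?thesis using r by blast
    qed
    also have "\<dots> \<longleftrightarrow> v = (- r) mod ?q"
      using r_range q by (metis add.inverse_inverse mod_minus_eq mod_pos_pos_trivial pos_mod_sign pos_mod_bound)
    finally show ?thesis .
  qed
  then show "\<exists>v. {v. is_hole b x i v} = {v}" by auto
qed

text \<open>The main
  step is that the hole coordinates \<theta> push \<nu> forward to Haar measure on \<Omega>: by shift
  invariance all cylinders {\<theta>_j = c_j, j \<in> J} obtained from each other by rotation have
  equal measure, and by the Chinese remainder theorem every cylinder is a rotation of
  every other one, so each of the \<Prod>j\<in>J. b j cylinders has measure 1 / \<Prod>j\<in>J. b j.\<close>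

locale ergodic_on_Y =
  fixes b :: "nat \<Rightarrow> nat" and \<nu> :: "(int \<Rightarrow> bool) measure"
  assumes b_ge: "\<And>i. b i \<ge> 2"
    and b_coprime: "\<And>i j. i \<noteq> j \<Longrightarrow> coprime (b i) (b j)"
    and prob: "prob_space \<nu>"
    and sets_nu: "sets \<nu> = sets cfg_space"
    and erg: "ergodic_meas \<nu> shift"
    and on_Y: "emeasure \<nu> (Y_set b) = 1"
begin

sublocale prob_space \<nu> by (rule prob)

lemma bpos: "b i > 0"
  using b_ge[of i] by simp

lemma space_nu[simp]: "space \<nu> = UNIV"
  using sets_eq_imp_space_eq[OF sets_nu] by simp

lemma measurable_nu: "measurable \<nu> N = measurable cfg_space N"
  by (rule measurable_cong_sets[OF sets_nu refl])

lemma shift_measurable_nu: "shift \<in> measurable \<nu> \<nu>"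
  by (simp add: measurable_nu measurable_cong_sets[OF refl sets_nu])

lemma shift_invariant: "distr \<nu> \<nu> shift = \<nu>"
  using erg unfolding ergodic_meas_def invariant_meas_def by simp

lemma unique_holes_nu: "unique_holes b \<in> sets \<nu>"
  using sets_nu by simp

lemma AE_unique_holes: "AE x in \<nu>. x \<in> unique_holes b"
proof -
  have "emeasure \<nu> (Y_set b) \<le> emeasure \<nu> (unique_holes b)"
    by (rule emeasure_mono[OF Y_subset_unique_holes[OF bpos] unique_holes_nu])
  then have "1 \<le> prob (unique_holes b)" using on_Y by (simp add: emeasure_eq_measure)
  then have "prob (unique_holes b) = 1" using prob_le_1[of "unique_holes b"] by linarith
  then show ?thesis by (rule AE_prob_1)
qed

lemma emeasure_Int_unique_holes: "A \<in> sets \<nu> \<Longrightarrow> emeasure \<nu> (A \<inter> unique_holes b) = emeasure \<nu> A"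
  by (rule emeasure_eq_AE) (use AE_unique_holes unique_holes_nu in auto)

lemma theta_in_range: "0 \<le> theta b x i \<and> theta b x i < int (b i)"
  by (rule theta_range) (rule bpos)

lemma theta_measurable_nu: "theta b \<in> measurable \<nu> (haar_Omega b)"
  by (simp add: measurable_nu)

definition cyl :: "nat set \<Rightarrow> (nat \<Rightarrow> int) \<Rightarrow> (int \<Rightarrow> bool) set" where
  "cyl J c = {x. \<forall>j\<in>J. theta b x j = c j}"

definition residue_box :: "nat set \<Rightarrow> (nat \<Rightarrow> int) set" where
  "residue_box J = (\<Pi>\<^sub>E j\<in>J. {0..<int (b j)})"

lemma cyl_sets: "cyl J c \<in> sets \<nu>"
proof -
  have "Measurable.pred cfg_space (\<lambda>x. \<forall>j\<in>J. theta b x j = c j)" by measurable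
  then show ?thesis unfolding cyl_def using sets_nu by (simp add: pred_def)
qed

lemma cyl_cong: "(\<And>j. j \<in> J \<Longrightarrow> c j = c' j) \<Longrightarrow> cyl J c = cyl J c'"
  unfolding cyl_def by auto

lemma cyl_rotate:
  assumes "\<forall>j\<in>J. 0 \<le> c j \<and> c j < int (b j)"
  shows "emeasure \<nu> (cyl J c) = emeasure \<nu> (cyl J (\<lambda>j. (c j - 1) mod int (b j)))"
proof -
  have "shift -` cyl J c \<inter> unique_holes b = cyl J (\<lambda>j. (c j - 1) mod int (b j)) \<inter> unique_holes b"
  proof (intro set_eqI)
    fix x
    show "x \<in> shift -` cyl J c \<inter> unique_holes b \<longleftrightarrow>
          x \<in> cyl J (\<lambda>j. (c j - 1) mod int (b j)) \<inter> unique_holes b"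
    proof (cases "x \<in> unique_holes b")
      case True
      then have "theta b (shift x) j = (theta b x j + 1) mod int (b j)" for j
        using theta_shift(2)[OF bpos True] unfolding rot_def by simp
      then have "theta b (shift x) j = c j \<longleftrightarrow> theta b x j = (c j - 1) mod int (b j)" if "j \<in> J" for j
        using mod_step_iff[of "theta b x j" "int (b j)" "c j"] theta_in_range[of x j] assms that
        by auto
      then show ?thesis using True unfolding cyl_def by auto
    qed simp
  qed
  have "emeasure \<nu> (cyl J c) = emeasure \<nu> (shift -` cyl J c)"
    using emeasure_distr[OF shift_measurable_nu cyl_sets] by (simp add: shift_invariant)
  also have "\<dots> = emeasure \<nu> (shift -` cyl J c \<inter> unique_holes b)"
    using measurable_sets[OF shift_measurable_nu cyl_sets]
    by (simp add: emeasure_Int_unique_holes)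
  also have "\<dots> = emeasure \<nu> (cyl J (\<lambda>j. (c j - 1) mod int (b j)))"
    unfolding \<open>shift -` cyl J c \<inter> unique_holes b = _\<close> by (rule emeasure_Int_unique_holes[OF cyl_sets])
  finally show ?thesis .
qed

lemma cyl_rotate_iter:
  assumes "\<forall>j\<in>J. 0 \<le> c j \<and> c j < int (b j)"
  shows "emeasure \<nu> (cyl J c) = emeasure \<nu> (cyl J (\<lambda>j. (c j - int m) mod int (b j)))"
proof (induction m)
  case 0
  have "cyl J (\<lambda>j. (c j - int 0) mod int (b j)) = cyl J c" using assms by (intro cyl_cong) simp
  then show ?case by simp
next
  case (Suc m)
  have "\<forall>j\<in>J. 0 \<le> (c j - int m) mod int (b j) \<and> (c j - int m) mod int (b j) < int (b j)"
    using bpos by simp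
  moreover have "((c j - int m) mod int (b j) - 1) mod int (b j) = (c j - int (Suc m)) mod int (b j)" for j
    by (simp add: mod_diff_left_eq algebra_simps)
  ultimately show ?case
    using Suc.IH cyl_rotate[of J "\<lambda>j. (c j - int m) mod int (b j)"] by simp
qed

text \<open>By the Chinese remainder theorem any two cylinders over a finite J are rotations of
  each other, hence all have the same measure.\<close>

lemma cyl_equal:
  assumes "finite J" "c \<in> residue_box J" "c' \<in> residue_box J"
  shows "emeasure \<nu> (cyl J c) = emeasure \<nu> (cyl J c')"
proof -
  obtain m where m: "\<forall>j\<in>J. [int m = c j - c' j] (mod int (b j))"
    using chinese_remainder_int_targets[OF assms(1), of b "\<lambda>j. c j - c' j"] bpos b_coprime by blast
  have "(c j - int m) mod int (b j) = c' j" if "j \<in> J" for j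
  proof -
    have "[c j - int m = c j - (c j - c' j)] (mod int (b j))"
      using m that by (intro cong_diff cong_refl) auto
    then show ?thesis using assms(3) that unfolding residue_box_def cong_def by (auto simp: PiE_iff)
  qed
  then have "cyl J (\<lambda>j. (c j - int m) mod int (b j)) = cyl J c'" by (rule cyl_cong)
  moreover have "\<forall>j\<in>J. 0 \<le> c j \<and> c j < int (b j)"
    using assms(2) unfolding residue_box_def by (auto simp: PiE_iff)
  ultimately show ?thesis using cyl_rotate_iter[of J c m] by simp
qed

text \<open>The cylinders over J partition the configuration space; as they have equal measure,
  each has measure 1 / \<Prod>j\<in>J. b j.\<close>

lemma cyl_disjoint:
  assumes "c \<in> residue_box J" "c' \<in> residue_box J" "c \<noteq> c'"
  shows "cyl J c \<inter> cyl J c' = {}"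
proof -
  obtain j where "j \<in> J" "c j \<noteq> c' j"
    using assms PiE_ext unfolding residue_box_def by metis
  then show ?thesis unfolding cyl_def by auto
qed

lemma cyl_restrict: "x \<in> cyl J (restrict (theta b x) J)"
  unfolding cyl_def by simp

lemma cyl_cover: "(\<Union>c\<in>residue_box J. cyl J c) = UNIV"
proof -
  have "restrict (theta b x) J \<in> residue_box J" for x
    unfolding residue_box_def using theta_in_range by auto
  then show ?thesis using cyl_restrict by blast
qed

lemma card_residue_box: "finite J \<Longrightarrow> card (residue_box J) = (\<Prod>j\<in>J. b j)"
  unfolding residue_box_def by (simp add: card_PiE)

lemma finite_residue_box: "finite J \<Longrightarrow> finite (residue_box J)"
  unfolding residue_box_def by (rule finite_PiE) auto

lemma emeasure_cyl:
  assumes "finite J" "c \<in> residue_box J"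
  shows "emeasure \<nu> (cyl J c) = ennreal (1 / real (\<Prod>j\<in>J. b j))"
proof -
  have disj: "disjoint_family_on (cyl J) (residue_box J)"
    unfolding disjoint_family_on_def using cyl_disjoint by blast
  have "1 = emeasure \<nu> (\<Union>c'\<in>residue_box J. cyl J c')"
    unfolding cyl_cover using emeasure_space_1 by simp
  also have "\<dots> = (\<Sum>c'\<in>residue_box J. emeasure \<nu> (cyl J c'))"
    using cyl_sets disj finite_residue_box[OF assms(1)] by (intro sum_emeasure[symmetric]) auto
  also have "\<dots> = (\<Sum>c'\<in>residue_box J. emeasure \<nu> (cyl J c))"
    using cyl_equal[OF assms(1) _ assms(2)] by simp
  also have "\<dots> = ennreal (real (\<Prod>j\<in>J. b j) * prob (cyl J c))"
    by (simp add: card_residue_box[OF assms(1)] emeasure_eq_measure ennreal_of_nat_eq_real_of_nat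
        ennreal_mult prod_nonneg)
  finally have "real (\<Prod>j\<in>J. b j) * prob (cyl J c) = 1" by simp
  moreover have "real (\<Prod>j\<in>J. b j) > 0" using bpos by (simp add: prod_pos)
  ultimately have "prob (cyl J c) = 1 / real (\<Prod>j\<in>J. b j)"
    by (simp add: field_simps)
  then show ?thesis by (simp add: emeasure_eq_measure)
qed

abbreviation uniform_residues :: "nat \<Rightarrow> int measure" where
  "uniform_residues i \<equiv> measure_pmf (pmf_of_set {0..<int (b i)})"

lemma haar_cylinder:
  assumes "finite J"
  shows "emeasure (haar_Omega b) (prod_emb UNIV uniform_residues J (Pi\<^sub>E J A))
    = ennreal ((\<Prod>j\<in>J. real (card ({0..<int (b j)} \<inter> A j))) / real (\<Prod>j\<in>J. b j))"
proof -
  have "emeasure (haar_Omega b) (prod_emb UNIV uniform_residues J (Pi\<^sub>E J A))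
     = (\<Prod>j\<in>J. emeasure (uniform_residues j) (A j))"
    unfolding haar_Omega_def by (rule emeasure_PiM_emb) (use assms in \<open>auto intro: prob_space_measure_pmf\<close>)
  also have "\<dots> = (\<Prod>j\<in>J. ennreal (real (card ({0..<int (b j)} \<inter> A j)) / real (b j)))"
    using bpos by (intro prod.cong refl) (simp add: emeasure_pmf_of_set)
  also have "\<dots> = ennreal ((\<Prod>j\<in>J. real (card ({0..<int (b j)} \<inter> A j))) / real (\<Prod>j\<in>J. b j))"
    by (simp add: prod_ennreal prod_dividef)
  finally show ?thesis .
qed

lemma theta_cylinder:
  assumes "finite J"
  shows "emeasure (distr \<nu> (haar_Omega b) (theta b)) (prod_emb UNIV uniform_residues J (Pi\<^sub>E J A))
    = ennreal ((\<Prod>j\<in>J. real (card ({0..<int (b j)} \<inter> A j))) / real (\<Prod>j\<in>J. b j))"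
proof -
  let ?emb = "prod_emb UNIV uniform_residues J (Pi\<^sub>E J A)"
  define C where "C = (\<Pi>\<^sub>E j\<in>J. {0..<int (b j)} \<inter> A j)"
  have C_box: "C \<subseteq> residue_box J" unfolding C_def residue_box_def by auto
  have emb_sets: "?emb \<in> sets (haar_Omega b)"
    unfolding haar_Omega_def by (rule sets_PiM_I) (use assms in auto)
  have preimage: "theta b -` ?emb = (\<Union>c\<in>C. cyl J c)"
  proof (intro set_eqI iffI)
    fix x assume "x \<in> theta b -` ?emb"
    then have "restrict (theta b x) J \<in> C"
      unfolding C_def using theta_in_range by (auto simp: prod_emb_iff)
    then show "x \<in> (\<Union>c\<in>C. cyl J c)" using cyl_restrict by blast
  qed (auto simp: C_def cyl_def prod_emb_iff space_PiM)
  have "emeasure (distr \<nu> (haar_Omega b) (theta b)) ?emb = emeasure \<nu> (\<Union>c\<in>C. cyl J c)"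
    using emeasure_distr[OF theta_measurable_nu emb_sets] preimage by simp
  also have "\<dots> = (\<Sum>c\<in>C. emeasure \<nu> (cyl J c))"
  proof (rule sum_emeasure[symmetric])
    show "disjoint_family_on (cyl J) C"
      using C_box cyl_disjoint unfolding disjoint_family_on_def by blast
    show "finite C" by (rule finite_subset[OF C_box finite_residue_box[OF assms]])
  qed (use cyl_sets in auto)
  also have "\<dots> = (\<Sum>c\<in>C. ennreal (1 / real (\<Prod>j\<in>J. b j)))"
    using emeasure_cyl[OF assms] C_box by (intro sum.cong) auto
  also have "\<dots> = ennreal ((\<Prod>j\<in>J. real (card ({0..<int (b j)} \<inter> A j))) / real (\<Prod>j\<in>J. b j))"
    using assms unfolding C_def
    by (simp add: card_PiE ennreal_of_nat_eq_real_of_nat ennreal_mult[symmetric] prod_nonneg)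
  finally show ?thesis .
qed

theorem theta_distr_haar: "distr \<nu> (haar_Omega b) (theta b) = haar_Omega b"
proof (rule measure_eqI_PiM_infinite[where I=UNIV and M=uniform_residues])
  show "finite_measure (distr \<nu> (haar_Omega b) (theta b))"
    using prob_space_distr[OF theta_measurable_nu] by (simp add: prob_space_def)
qed (simp_all add: haar_Omega_def[symmetric] theta_cylinder haar_cylinder)

end


lemma invariant_image:
  assumes inv: "invariant_meas \<mu> T"
    and F: "F \<in> measurable \<mu> N" and S: "S \<in> measurable N N"
    and intertwine: "AE x in \<mu>. S (F x) = F (T x)"
  shows "invariant_meas (distr \<mu> N F) S"
proof -
  let ?\<rho> = "distr \<mu> N F"
  have T: "T \<in> measurable \<mu> \<mu>" and T_inv: "distr \<mu> \<mu> T = \<mu>"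
    using inv unfolding invariant_meas_def by auto
  have F\<rho>: "F \<in> measurable \<mu> ?\<rho>" using F by (simp add: measurable_cong_sets[OF refl sets_distr])
  have S\<rho>: "S \<in> measurable ?\<rho> ?\<rho>" using S by (simp add: measurable_cong_sets[OF sets_distr sets_distr])
  have "distr ?\<rho> ?\<rho> S = distr \<mu> ?\<rho> (S \<circ> F)"
    using S by (intro distr_distr[OF _ F]) (simp add: measurable_cong_sets[OF refl sets_distr])
  also have "\<dots> = distr \<mu> ?\<rho> (F \<circ> T)"
    using intertwine measurable_comp[OF F\<rho> S\<rho>] measurable_comp[OF T F\<rho>]
    by (intro distr_cong_AE) auto
  also have "\<dots> = distr (distr \<mu> \<mu> T) ?\<rho> F" by (rule distr_distr[OF F\<rho> T, symmetric])
  also have "\<dots> = ?\<rho>" unfolding T_inv by (rule distr_cong) simp_all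
  finally show ?thesis unfolding invariant_meas_def using S\<rho> by blast
qed

lemma ergodic_image:
  assumes erg: "ergodic_meas \<mu> T"
    and F: "F \<in> measurable \<mu> N" and S: "S \<in> measurable N N"
    and G: "G \<in> sets \<mu>" "AE x in \<mu>. x \<in> G" "\<And>x. x \<in> space \<mu> \<Longrightarrow> T x \<in> G \<longleftrightarrow> x \<in> G"
    and intertwine: "\<And>x. x \<in> G \<Longrightarrow> S (F x) = F (T x)"
  shows "ergodic_meas (distr \<mu> N F) S"
proof -
  have G_space: "G \<subseteq> space \<mu>" by (rule sets.sets_into_space[OF G(1)])
  have "invariant_meas (distr \<mu> N F) S"
    using erg G(2) intertwine F S unfolding ergodic_meas_def
    by (intro invariant_image) (auto elim: AE_mp)
  moreover have "emeasure (distr \<mu> N F) A = 0 \<or> emeasure (distr \<mu> N F) A = 1"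
    if A: "A \<in> sets N" "S -` A \<inter> space N = A" for A
  proof -
    define B where "B = F -` A \<inter> G"
    have "B = (F -` A \<inter> space \<mu>) \<inter> G" unfolding B_def using G_space by blast
    then have B_sets: "B \<in> sets \<mu>" using measurable_sets[OF F A(1)] G(1) by simp
    have "T -` B \<inter> space \<mu> = B"
    proof (intro set_eqI)
      fix x show "x \<in> T -` B \<inter> space \<mu> \<longleftrightarrow> x \<in> B"
      proof (cases "x \<in> space \<mu>")
        case True
        have S_A: "S (F x) \<in> A \<longleftrightarrow> F x \<in> A"
          using A(2) measurable_space[OF F True] by auto
        have "x \<in> T -` B \<longleftrightarrow> x \<in> G \<and> F (T x) \<in> A" unfolding B_def using G(3)[OF True] by auto
        also have "\<dots> \<longleftrightarrow> x \<in> G \<and> F x \<in> A" using intertwine[of x] S_A by auto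
        finally show ?thesis using True unfolding B_def by auto
      qed (use G_space in \<open>auto simp: B_def\<close>)
    qed
    then have "emeasure \<mu> B = 0 \<or> emeasure \<mu> B = 1"
      using erg B_sets unfolding ergodic_meas_def by blast
    moreover have "emeasure (distr \<mu> N F) A = emeasure \<mu> (F -` A \<inter> space \<mu>)"
      by (rule emeasure_distr[OF F A(1)])
    moreover have "\<dots> = emeasure \<mu> B"
    proof (rule emeasure_eq_AE)
      show "AE x in \<mu>. x \<in> F -` A \<inter> space \<mu> \<longleftrightarrow> x \<in> B"
        using G(2) by eventually_elim (use G_space in \<open>auto simp: B_def\<close>)
    qed (use measurable_sets[OF F A(1)] B_sets in auto)
    ultimately show ?thesis by simp
  qed
  ultimately show ?thesis unfolding ergodic_meas_def by simp
qed

text \<open>The joining: \<rho> is the image of \<nu> under x \<mapsto> (\<phi>(\<theta>(x)), x).  It projects onto the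
  Mirsky measure because \<theta>_*\<nu> is Haar measure, it is mapped back to \<nu> by M because every
  x \<in> Y lies below \<phi>(\<theta>(x)), and it is ergodic as a factor of (\<nu>, S).\<close>

context ergodic_on_Y
begin

definition lift :: "(int \<Rightarrow> bool) \<Rightarrow> (int \<Rightarrow> bool) \<times> (int \<Rightarrow> bool)" where
  "lift x = (phi b (theta b x), x)"

definition joining :: "((int \<Rightarrow> bool) \<times> (int \<Rightarrow> bool)) measure" where
  "joining = distr \<nu> (cfg_space \<Otimes>\<^sub>M cfg_space) lift"

lemma lift_measurable: "lift \<in> measurable \<nu> (cfg_space \<Otimes>\<^sub>M cfg_space)"
  unfolding lift_def measurable_nu by measurable

lemma joining_prob: "prob_space joining"
  unfolding joining_def by (rule prob_space_distr[OF lift_measurable])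

lemma joining_sets: "sets joining = sets (cfg_space \<Otimes>\<^sub>M cfg_space)"
  unfolding joining_def by simp

lemma joining_fst: "distr joining cfg_space fst = mirsky b"
proof -
  have "distr joining cfg_space fst = distr \<nu> cfg_space (phi b \<circ> theta b)"
    unfolding joining_def using lift_measurable
    by (simp add: distr_distr comp_def lift_def)
  also have "\<dots> = distr (distr \<nu> (haar_Omega b) (theta b)) cfg_space (phi b)"
    by (rule distr_distr[OF phi_measurable theta_measurable_nu, symmetric])
  finally show ?thesis unfolding theta_distr_haar mirsky_def .
qed

lemma joining_Mmap: "distr joining cfg_space Mmap = \<nu>"
proof -
  have "distr joining cfg_space Mmap = distr \<nu> cfg_space (Mmap \<circ> lift)"
    unfolding joining_def by (rule distr_distr[OF Mmap_measurable lift_measurable])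
  also have "\<dots> = distr \<nu> cfg_space (\<lambda>x. x)"
  proof (rule distr_cong_AE[OF refl refl])
    show "AE x in \<nu>. (Mmap \<circ> lift) x = x"
      using AE_unique_holes by eventually_elim (auto simp: Mmap_def lift_def le_phi_theta)
  qed (use measurable_comp[OF lift_measurable Mmap_measurable] in \<open>simp_all add: measurable_nu\<close>)
  also have "\<dots> = \<nu>" by (rule distr_id2[OF sets_nu[symmetric]])
  finally show ?thesis .
qed

lemma joining_ergodic: "ergodic_meas joining (\<lambda>(x, u). (shift x, shift u))"
  unfolding joining_def
proof (rule ergodic_image[OF erg lift_measurable _ unique_holes_nu AE_unique_holes])
  show "(\<lambda>(x, u). (shift x, shift u)) \<in> measurable (cfg_space \<Otimes>\<^sub>M cfg_space) (cfg_space \<Otimes>\<^sub>M cfg_space)"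
    by measurable
  show "shift x \<in> unique_holes b \<longleftrightarrow> x \<in> unique_holes b" for x
    by (rule unique_holes_shift_iff[OF bpos])
  show "(\<lambda>(x, u). (shift x, shift u)) (lift x) = lift (shift x)" if "x \<in> unique_holes b" for x
    using theta_shift(2)[OF bpos that] by (simp add: lift_def phi_rot)
qed

lemma joining_X_eta:
  assumes "summable (\<lambda>i. 1 / real (b i))"
  shows "emeasure joining (X_eta b \<times> UNIV) = 1"
proof -
  have "X_eta b \<times> UNIV \<in> sets (cfg_space \<Otimes>\<^sub>M cfg_space)"
    using X_eta_sets sets.top[of cfg_space] by (intro pair_measureI) simp_all
  then have "emeasure joining (X_eta b \<times> UNIV) = emeasure \<nu> (lift -` (X_eta b \<times> UNIV))"
    unfolding joining_def using emeasure_distr[OF lift_measurable] by simp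
  also have "lift -` (X_eta b \<times> UNIV) = UNIV"
    using phi_in_X_eta[OF b_ge b_coprime assms] by (auto simp: lift_def)
  finally show ?thesis using emeasure_space_1 by simp
qed

end

theorem mainTheorem3:
  fixes b :: "nat \<Rightarrow> nat" and \<nu> :: "(int \<Rightarrow> bool) measure"
  assumes b_ge: "\<And>i. b i \<ge> 2"
    and b_coprime: "\<And>i j. i \<noteq> j \<Longrightarrow> coprime (b i) (b j)"
    and b_summable: "summable (\<lambda>i. 1 / real (b i))"
    and prob: "prob_space \<nu>"
    and sets_nu: "sets \<nu> = sets cfg_space"
    and erg: "ergodic_meas \<nu> shift"
    and on_X: "emeasure \<nu> (X_eta b) = 1"
    and on_Y: "emeasure \<nu> (Y_set b) = 1"
  shows "\<exists>\<rho>::((int \<Rightarrow> bool) \<times> (int \<Rightarrow> bool)) measure.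
           prob_space \<rho> \<and> sets \<rho> = sets (cfg_space \<Otimes>\<^sub>M cfg_space)
           \<and> emeasure \<rho> (X_eta b \<times> UNIV) = 1
           \<and> ergodic_meas \<rho> (\<lambda>(x, u). (shift x, shift u))
           \<and> distr \<rho> cfg_space fst = mirsky b
           \<and> distr \<rho> cfg_space Mmap = \<nu>"
proof -
  interpret ergodic_on_Y b \<nu>
    by (rule ergodic_on_Y.intro[OF b_ge b_coprime prob sets_nu erg on_Y])
  show ?thesis
    using joining_prob joining_sets joining_X_eta[OF b_summable] joining_ergodic
      joining_fst joining_Mmap by blast
qed

end
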